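(* Let $m,n\in\mathbb{N}$, and fix a word pattern of $m$ letters $S$ and $n$ letters $T$ whose last letter is $S$. Then there are integers $c_1,\dots,c_m$, depending only on the pattern and not on $g$, such that for every $g\in\mathcal{H}(\mathbb{D})$ the corresponding $g$-word $L\in W^S_g(m,n)$ satisfies $$L=S_g^mT_g^n\Pi_0+\sum_{j=1}^mc_jS_g^{m-j}T_g^{n+j}\Pi_0.$$
   Context: $\mathcal{H}(\mathbb{D})$ analytic functions on the unit disc; $\Pi_0f=f-f(0)$. For $g\in\mathcal{H}(\mathbb{D})$: $T_gf(z)=\int_0^zf(\zeta)g'(\zeta)d\zeta$, $S_gf(z)=\int_0^zf'(\zeta)g(\zeta)d\zeta$, with $S_g^0$ the identity. $W^S_g(m,n)$ is the set of products of $m$ factors $S_g$ and $n$ factors $T_g$ (in any order) whose last (rightmost) factor is $S_g$. *)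

theory Defs
  imports "HOL-Complex_Analysis.Complex_Analysis"
begin

definition unit_disc :: "complex set" where
  "unit_disc = ball 0 1"

definition Pi0 :: "(complex \<Rightarrow> complex) \<Rightarrow> (complex \<Rightarrow> complex)" where
  "Pi0 f = (\<lambda>z. f z - f 0)"

definition T_op :: "(complex \<Rightarrow> complex) \<Rightarrow> (complex \<Rightarrow> complex) \<Rightarrow> (complex \<Rightarrow> complex)" where
  "T_op g f = (\<lambda>z. contour_integral (linepath 0 z) (\<lambda>\<zeta>. f \<zeta> * deriv g \<zeta>))"

definition S_op :: "(complex \<Rightarrow> complex) \<Rightarrow> (complex \<Rightarrow> complex) \<Rightarrow> (complex \<Rightarrow> complex)" where
  "S_op g f = (\<lambda>z. contour_integral (linepath 0 z) (\<lambda>\<zeta>. deriv f \<zeta> * g \<zeta>))"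

text \<open>A word pattern is a list of letters: True stands for S, False for T.
  The corresponding g-word is the product of the operators in the order of the list,
  so the last list element is the rightmost factor (applied first).\<close>
definition word_op :: "(complex \<Rightarrow> complex) \<Rightarrow> bool list \<Rightarrow> (complex \<Rightarrow> complex) \<Rightarrow> (complex \<Rightarrow> complex)" where
  "word_op g w = foldr (\<lambda>b acc. (if b then S_op g else T_op g) \<circ> acc) w id"

end

theory Submission
  imports Defs
begin

(*
  For h with h(0) = 0, integration by parts gives T_g h + S_g h = g h, and S_g T_g h = T_g (g h);
  hence T_g S_g = S_g T_g - T_g^2 on such functions. Using this rule to move every T_g to the
  right, a word with m letters S and n letters T becomes S_g^m T_g^n plus an integer combination
  of the monomials S_g^p T_g^(m+n-p) with p < m, and the coefficients come from the rewriting
  alone, so they do not depend on g. A word whose last letter is S does not see constants, so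
  it may be applied to Pi_0 f instead of f.
*)

lemma T_op_at_0 [simp]: "T_op g h 0 = 0"
  by (simp add: T_op_def)

lemma S_op_at_0 [simp]: "S_op g h 0 = 0"
  by (simp add: S_op_def)

definition ST_monomial :: "(complex \<Rightarrow> complex) \<Rightarrow> nat \<Rightarrow> nat \<Rightarrow> (complex \<Rightarrow> complex) \<Rightarrow> complex \<Rightarrow> complex"
  where "ST_monomial g p q h = (S_op g ^^ p) ((T_op g ^^ q) h)"

lemma ST_monomial_0_0 [simp]: "ST_monomial g 0 0 h = h"
  by (simp add: ST_monomial_def)

lemma S_op_ST_monomial [simp]: "S_op g (ST_monomial g p q h) = ST_monomial g (Suc p) q h"
  by (simp add: ST_monomial_def)

lemma T_op_ST_monomial_0 [simp]: "T_op g (ST_monomial g 0 q h) = ST_monomial g 0 (Suc q) h"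
  by (simp add: ST_monomial_def)

lemma ST_monomial_at_0: "h 0 = 0 \<Longrightarrow> ST_monomial g p q h 0 = 0"
  by (cases p; cases q) (simp_all add: ST_monomial_def)

lemma word_op_Nil [simp]: "word_op g [] = id"
  by (simp add: word_op_def)

lemma word_op_Cons [simp]: "word_op g (b # w) = (if b then S_op g else T_op g) \<circ> word_op g w"
  by (simp add: word_op_def)

lemma word_op_append_single: "word_op g (w @ [b]) h = word_op g w ((if b then S_op g else T_op g) h)"
  by (induction w) simp_all

locale origin_starlike =
  fixes U :: "complex set"
  assumes open_U: "open U"
    and zero_in_U: "0 \<in> U"
    and segment_subset_U: "z \<in> U \<Longrightarrow> closed_segment 0 z \<subseteq> U"
begin

lemma path_image_linepath_0_subset: "z \<in> U \<Longrightarrow> path_image (linepath 0 z) \<subseteq> U"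
  by (simp add: segment_subset_U)

lemma contour_integral_linepath_0_primitive:
  assumes "\<And>x. x \<in> U \<Longrightarrow> (F has_field_derivative f x) (at x)" and "z \<in> U"
  shows "contour_integral (linepath 0 z) f = F z - F 0"
proof -
  have "(f has_contour_integral F z - F 0) (linepath 0 z)"
    using contour_integral_primitive[OF _ valid_path_linepath path_image_linepath_0_subset[OF \<open>z \<in> U\<close>]]
      assms(1) by (simp add: has_field_derivative_at_within)
  then show ?thesis
    by (rule contour_integral_unique)
qed

lemma contour_integrable_linepath_0:
  "f holomorphic_on U \<Longrightarrow> z \<in> U \<Longrightarrow> f contour_integrable_on linepath 0 z"
  by (meson contour_integrable_holomorphic_simple open_U path_image_linepath_0_subset valid_path_linepath)

lemma has_field_derivative_contour_integral_linepath_0: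
  assumes f: "f holomorphic_on U" and z: "z \<in> U"
  shows "((\<lambda>z. contour_integral (linepath 0 z) f) has_field_derivative f z) (at z)"
proof -
  have "starlike U"
    unfolding starlike_def using zero_in_U segment_subset_U by blast
  then obtain F where F: "\<And>x. x \<in> U \<Longrightarrow> (F has_field_derivative f x) (at x)"
    using holomorphic_starlike_primitive[of U f "{}"] f open_U
    by (metis Diff_empty finite.emptyI holomorphic_on_imp_continuous_on holomorphic_on_imp_differentiable_at)
  have "((\<lambda>x. F x - F 0) has_field_derivative f z) (at z)"
    using F[OF z] by (auto intro: derivative_eq_intros)
  then show ?thesis
    by (rule has_field_derivative_transform_within_open[OF _ open_U z])
       (simp add: contour_integral_linepath_0_primitive[OF F])
qed

lemma contour_integral_linepath_0_sum:
  assumes "finite A" and f: "\<And>i. i \<in> A \<Longrightarrow> f i holomorphic_on U" and z: "z \<in> U"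
  shows "contour_integral (linepath 0 z) (\<lambda>x. \<Sum>i\<in>A. c i * f i x)
    = (\<Sum>i\<in>A. c i * contour_integral (linepath 0 z) (f i))"
proof -
  have integrable: "f i contour_integrable_on linepath 0 z" if "i \<in> A" for i
    using f[OF that] z by (rule contour_integrable_linepath_0)
  then have "contour_integral (linepath 0 z) (\<lambda>x. \<Sum>i\<in>A. c i * f i x)
      = (\<Sum>i\<in>A. contour_integral (linepath 0 z) (\<lambda>x. c i * f i x))"
    by (intro contour_integral_sum[OF \<open>finite A\<close>] contour_integrable_lmul)
  also have "\<dots> = (\<Sum>i\<in>A. c i * contour_integral (linepath 0 z) (f i))"
    using integrable by (simp add: contour_integral_lmul)
  finally show ?thesis .
qed

lemma has_field_derivative_deriv:
  "f holomorphic_on U \<Longrightarrow> z \<in> U \<Longrightarrow> (f has_field_derivative deriv f z) (at z)"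
  using holomorphic_derivI open_U by blast

lemma has_field_derivative_T_op:
  assumes "g holomorphic_on U" "h holomorphic_on U" "z \<in> U"
  shows "(T_op g h has_field_derivative h z * deriv g z) (at z)"
  unfolding T_op_def using assms open_U
  by (intro has_field_derivative_contour_integral_linepath_0 holomorphic_intros) auto

lemma has_field_derivative_S_op:
  assumes "g holomorphic_on U" "h holomorphic_on U" "z \<in> U"
  shows "(S_op g h has_field_derivative deriv h z * g z) (at z)"
  unfolding S_op_def using assms open_U
  by (intro has_field_derivative_contour_integral_linepath_0 holomorphic_intros) auto

lemma deriv_T_op:
  "g holomorphic_on U \<Longrightarrow> h holomorphic_on U \<Longrightarrow> z \<in> U \<Longrightarrow> deriv (T_op g h) z = h z * deriv g z"
  by (rule DERIV_imp_deriv) (rule has_field_derivative_T_op)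

lemma holomorphic_on_T_op: "g holomorphic_on U \<Longrightarrow> h holomorphic_on U \<Longrightarrow> T_op g h holomorphic_on U"
  using has_field_derivative_T_op holomorphic_on_open[OF open_U] by blast

lemma holomorphic_on_S_op: "g holomorphic_on U \<Longrightarrow> h holomorphic_on U \<Longrightarrow> S_op g h holomorphic_on U"
  using has_field_derivative_S_op holomorphic_on_open[OF open_U] by blast

lemma T_op_cong: "(\<And>x. x \<in> U \<Longrightarrow> u x = v x) \<Longrightarrow> z \<in> U \<Longrightarrow> T_op g u z = T_op g v z"
  unfolding T_op_def using path_image_linepath_0_subset by (intro contour_integral_eq) auto

lemma S_op_cong:
  assumes uv: "\<And>x. x \<in> U \<Longrightarrow> u x = v x" and z: "z \<in> U"
  shows "S_op g u z = S_op g v z"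
proof -
  have "deriv u x = deriv v x" if "x \<in> U" for x
    using eventually_nhds_in_open[OF open_U that] uv
    by (intro deriv_cong_ev) (auto elim!: eventually_mono)
  then show ?thesis
    unfolding S_op_def using path_image_linepath_0_subset[OF z]
    by (intro contour_integral_eq) auto
qed

lemma T_op_sum:
  assumes "finite A" and g: "g holomorphic_on U" and u: "\<And>i. i \<in> A \<Longrightarrow> u i holomorphic_on U"
    and z: "z \<in> U"
  shows "T_op g (\<lambda>x. \<Sum>i\<in>A. c i * u i x) z = (\<Sum>i\<in>A. c i * T_op g (u i) z)"
proof -
  have "T_op g (\<lambda>x. \<Sum>i\<in>A. c i * u i x) z
      = contour_integral (linepath 0 z) (\<lambda>x. \<Sum>i\<in>A. c i * (u i x * deriv g x))"
    by (simp add: T_op_def sum_distrib_right mult.assoc)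
  also have "\<dots> = (\<Sum>i\<in>A. c i * T_op g (u i) z)"
    unfolding T_op_def using g u open_U
    by (intro contour_integral_linepath_0_sum[OF \<open>finite A\<close> _ z] holomorphic_intros) auto
  finally show ?thesis .
qed

lemma S_op_sum:
  assumes "finite A" and g: "g holomorphic_on U" and u: "\<And>i. i \<in> A \<Longrightarrow> u i holomorphic_on U"
    and z: "z \<in> U"
  shows "S_op g (\<lambda>x. \<Sum>i\<in>A. c i * u i x) z = (\<Sum>i\<in>A. c i * S_op g (u i) z)"
proof -
  have "deriv (\<lambda>x. \<Sum>i\<in>A. c i * u i x) x = (\<Sum>i\<in>A. c i * deriv (u i) x)" if "x \<in> U" for x
    using u that open_U by (intro DERIV_imp_deriv derivative_eq_intros) (auto intro: has_field_derivative_deriv)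
  then have "S_op g (\<lambda>x. \<Sum>i\<in>A. c i * u i x) z
      = contour_integral (linepath 0 z) (\<lambda>x. \<Sum>i\<in>A. c i * (deriv (u i) x * g x))"
    unfolding S_op_def using path_image_linepath_0_subset[OF z]
    by (intro contour_integral_eq) (auto simp: sum_distrib_right mult.assoc)
  also have "\<dots> = (\<Sum>i\<in>A. c i * S_op g (u i) z)"
    unfolding S_op_def using g u open_U
    by (intro contour_integral_linepath_0_sum[OF \<open>finite A\<close> _ z] holomorphic_intros) auto
  finally show ?thesis .
qed

lemma T_op_diff:
  assumes "g holomorphic_on U" "u holomorphic_on U" "v holomorphic_on U" "z \<in> U"
  shows "T_op g (\<lambda>x. u x - v x) z = T_op g u z - T_op g v z"
  unfolding T_op_def using assms open_U
  by (subst contour_integral_diff[symmetric])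
     (auto simp: left_diff_distrib intro!: contour_integrable_linepath_0 holomorphic_intros)

lemma S_op_diff:
  assumes g: "g holomorphic_on U" and u: "u holomorphic_on U" and v: "v holomorphic_on U" and z: "z \<in> U"
  shows "S_op g (\<lambda>x. u x - v x) z = S_op g u z - S_op g v z"
proof -
  have "deriv (\<lambda>x. u x - v x) x = deriv u x - deriv v x" if "x \<in> U" for x
    using u v that open_U by (intro DERIV_imp_deriv derivative_eq_intros) (auto intro: has_field_derivative_deriv)
  then have "S_op g (\<lambda>x. u x - v x) z
      = contour_integral (linepath 0 z) (\<lambda>x. deriv u x * g x - deriv v x * g x)"
    unfolding S_op_def using path_image_linepath_0_subset[OF z]
    by (intro contour_integral_eq) (auto simp: left_diff_distrib)
  also have "\<dots> = S_op g u z - S_op g v z"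
    unfolding S_op_def using assms open_U
    by (intro contour_integral_diff contour_integrable_linepath_0 holomorphic_intros)
  finally show ?thesis .
qed

lemma T_op_add_S_op:
  assumes g: "g holomorphic_on U" and h: "h holomorphic_on U" and z: "z \<in> U"
  shows "T_op g h z + S_op g h z = g z * h z - g 0 * h 0"
proof -
  have "T_op g h z + S_op g h z
      = contour_integral (linepath 0 z) (\<lambda>x. h x * deriv g x + deriv h x * g x)"
    unfolding T_op_def S_op_def using assms open_U
    by (intro contour_integral_add[symmetric] contour_integrable_linepath_0 holomorphic_intros)
  also have "\<dots> = g z * h z - g 0 * h 0"
    using g h open_U
    by (intro contour_integral_linepath_0_primitive[OF _ z])
       (auto intro!: derivative_eq_intros has_field_derivative_deriv simp: mult.commute)
  finally show ?thesis .
qed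

lemma S_op_T_op_eq_T_op_mult:
  assumes g: "g holomorphic_on U" and h: "h holomorphic_on U" and z: "z \<in> U"
  shows "S_op g (T_op g h) z = T_op g (\<lambda>x. g x * h x) z"
  unfolding S_op_def[of g "T_op g h"] T_op_def[of g "\<lambda>x. g x * h x"]
  using path_image_linepath_0_subset[OF z] deriv_T_op[OF g h]
  by (intro contour_integral_eq) (auto simp: mult_ac)

lemma T_op_S_op_commutation:
  assumes g: "g holomorphic_on U" and h: "h holomorphic_on U" "h 0 = 0" and z: "z \<in> U"
  shows "T_op g (S_op g h) z = S_op g (T_op g h) z - T_op g (T_op g h) z"
proof -
  have "T_op g (S_op g h) z = T_op g (\<lambda>x. g x * h x - T_op g h x) z"
    using T_op_add_S_op[OF g h(1)] h(2) by (intro T_op_cong[OF _ z]) (simp add: algebra_simps)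
  also have "\<dots> = T_op g (\<lambda>x. g x * h x) z - T_op g (T_op g h) z"
    using g h by (intro T_op_diff[OF g _ _ z] holomorphic_intros holomorphic_on_T_op)
  also have "\<dots> = S_op g (T_op g h) z - T_op g (T_op g h) z"
    by (simp add: S_op_T_op_eq_T_op_mult[OF g h(1) z])
  finally show ?thesis .
qed

lemma S_op_Pi0: "f holomorphic_on U \<Longrightarrow> z \<in> U \<Longrightarrow> S_op g (Pi0 f) z = S_op g f z"
  unfolding S_op_def Pi0_def using path_image_linepath_0_subset open_U
  by (intro contour_integral_eq) (auto intro!: DERIV_imp_deriv derivative_eq_intros has_field_derivative_deriv)

lemma holomorphic_on_ST_monomial:
  "g holomorphic_on U \<Longrightarrow> h holomorphic_on U \<Longrightarrow> ST_monomial g p q h holomorphic_on U"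
proof (induction p)
  case 0
  then show ?case
    by (induction q) (simp_all add: ST_monomial_def holomorphic_on_T_op)
next
  case (Suc p)
  then show ?case
    using holomorphic_on_S_op[of g "ST_monomial g p q h"] by simp
qed

lemma holomorphic_on_word_op:
  "g holomorphic_on U \<Longrightarrow> h holomorphic_on U \<Longrightarrow> word_op g w h holomorphic_on U"
  by (induction w) (simp_all add: holomorphic_on_S_op holomorphic_on_T_op)

lemma word_op_cong:
  "(\<And>x. x \<in> U \<Longrightarrow> u x = v x) \<Longrightarrow> z \<in> U \<Longrightarrow> word_op g w u z = word_op g w v z"
  by (induction w arbitrary: z) (auto intro: S_op_cong T_op_cong)

definition int_span :: "nat \<Rightarrow> nat \<Rightarrow>
    ((complex \<Rightarrow> complex) \<Rightarrow> (complex \<Rightarrow> complex) \<Rightarrow> complex \<Rightarrow> complex) \<Rightarrow> bool"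
  where "int_span N m \<Phi> \<longleftrightarrow> (\<exists>c :: nat \<Rightarrow> int. \<forall>g h z.
    g holomorphic_on U \<longrightarrow> h holomorphic_on U \<longrightarrow> h 0 = 0 \<longrightarrow> z \<in> U \<longrightarrow>
      \<Phi> g h z = (\<Sum>p<m. of_int (c p) * ST_monomial g p (N - p) h z))"

lemma int_spanI:
  assumes "\<And>g h z. g holomorphic_on U \<Longrightarrow> h holomorphic_on U \<Longrightarrow> h 0 = 0 \<Longrightarrow> z \<in> U \<Longrightarrow>
      \<Phi> g h z = (\<Sum>p<m. of_int (c p) * ST_monomial g p (N - p) h z)"
  shows "int_span N m \<Phi>"
  using assms unfolding int_span_def by blast

lemma int_span_cong:
  assumes "int_span N m \<Phi>"
    and "\<And>g h z. g holomorphic_on U \<Longrightarrow> h holomorphic_on U \<Longrightarrow> h 0 = 0 \<Longrightarrow> z \<in> U \<Longrightarrow>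
      \<Psi> g h z = \<Phi> g h z"
  shows "int_span N m \<Psi>"
  using assms unfolding int_span_def by simp

lemma int_span_zero: "int_span N m (\<lambda>g h z. 0)"
  by (rule int_spanI[where c = "\<lambda>_. 0"]) simp

lemma int_span_monomial: "p < m \<Longrightarrow> int_span N m (\<lambda>g h. ST_monomial g p (N - p) h)"
  by (rule int_spanI[where c = "\<lambda>q. of_bool (q = p)"]) (simp add: sum.delta)

lemma int_span_mono:
  assumes "int_span N m \<Phi>" "m \<le> m'"
  shows "int_span N m' \<Phi>"
proof -
  obtain c where c: "\<And>g h z. g holomorphic_on U \<Longrightarrow> h holomorphic_on U \<Longrightarrow> h 0 = 0 \<Longrightarrow>
      z \<in> U \<Longrightarrow> \<Phi> g h z = (\<Sum>p<m. of_int (c p) * ST_monomial g p (N - p) h z)"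
    using assms(1) unfolding int_span_def by blast
  show ?thesis
  proof (rule int_spanI[where c = "\<lambda>p. if p < m then c p else 0"])
    fix g h z
    assume "g holomorphic_on U" "h holomorphic_on U" "h 0 = 0" "z \<in> U"
    moreover have "(\<Sum>p<m. of_int (c p) * ST_monomial g p (N - p) h z)
        = (\<Sum>p<m'. of_int (if p < m then c p else 0) * ST_monomial g p (N - p) h z)"
      using \<open>m \<le> m'\<close> by (intro sum.mono_neutral_cong_left) auto
    ultimately show "\<Phi> g h z = \<dots>"
      by (simp add: c)
  qed
qed

lemma int_span_add:
  assumes "int_span N m \<Phi>" "int_span N m \<Psi>"
  shows "int_span N m (\<lambda>g h z. \<Phi> g h z + \<Psi> g h z)"
proof -
  obtain c where c: "\<And>g h z. g holomorphic_on U \<Longrightarrow> h holomorphic_on U \<Longrightarrow> h 0 = 0 \<Longrightarrow> z \<in> U \<Longrightarrow>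
      \<Phi> g h z = (\<Sum>p<m. of_int (c p) * ST_monomial g p (N - p) h z)"
    using assms(1) unfolding int_span_def by blast
  obtain d where d: "\<And>g h z. g holomorphic_on U \<Longrightarrow> h holomorphic_on U \<Longrightarrow> h 0 = 0 \<Longrightarrow> z \<in> U \<Longrightarrow>
      \<Psi> g h z = (\<Sum>p<m. of_int (d p) * ST_monomial g p (N - p) h z)"
    using assms(2) unfolding int_span_def by blast
  show ?thesis
    by (rule int_spanI[where c = "\<lambda>p. c p + d p"]) (simp add: c d sum.distrib distrib_right)
qed

lemma int_span_scale:
  assumes "int_span N m \<Phi>"
  shows "int_span N m (\<lambda>g h z. of_int a * \<Phi> g h z)"
proof -
  obtain c where "\<And>g h z. g holomorphic_on U \<Longrightarrow> h holomorphic_on U \<Longrightarrow> h 0 = 0 \<Longrightarrow> z \<in> U \<Longrightarrow>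
      \<Phi> g h z = (\<Sum>p<m. of_int (c p) * ST_monomial g p (N - p) h z)"
    using assms unfolding int_span_def by blast
  then show ?thesis
    by (intro int_spanI[where c = "\<lambda>p. a * c p"]) (simp add: sum_distrib_left mult.assoc)
qed

lemma int_span_diff:
  assumes "int_span N m \<Phi>" "int_span N m \<Psi>"
  shows "int_span N m (\<lambda>g h z. \<Phi> g h z - \<Psi> g h z)"
  using int_span_add[OF assms(1) int_span_scale[OF assms(2), of "-1"]] by simp

lemma int_span_sum:
  assumes "finite A" "\<And>i. i \<in> A \<Longrightarrow> int_span N m (\<Phi> i)"
  shows "int_span N m (\<lambda>g h z. \<Sum>i\<in>A. \<Phi> i g h z)"
  using assms
proof (induction A rule: finite_induct)
  case empty
  then show ?case
    using int_span_zero by simp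
next
  case (insert i A)
  then show ?case
    using int_span_add[of N m "\<Phi> i" "\<lambda>g h z. \<Sum>i\<in>A. \<Phi> i g h z"] by simp
qed

lemma int_span_add_monomial:
  assumes "int_span N m (\<lambda>g h z. \<Phi> g h z - ST_monomial g m (N - m) h z)"
  shows "int_span N (Suc m) \<Phi>"
proof -
  have "int_span N (Suc m) (\<lambda>g h z. (\<Phi> g h z - ST_monomial g m (N - m) h z) + ST_monomial g m (N - m) h z)"
    using assms by (intro int_span_add int_span_monomial int_span_mono[OF assms]) auto
  then show ?thesis
    by (rule int_span_cong) simp
qed

lemma int_span_S_op:
  assumes "int_span N m \<Phi>"
  shows "int_span (Suc N) (Suc m) (\<lambda>g h. S_op g (\<Phi> g h))"
proof -
  obtain c where c: "\<And>g h z. g holomorphic_on U \<Longrightarrow> h holomorphic_on U \<Longrightarrow> h 0 = 0 \<Longrightarrow> z \<in> U \<Longrightarrow>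
      \<Phi> g h z = (\<Sum>p<m. of_int (c p) * ST_monomial g p (N - p) h z)"
    using assms unfolding int_span_def by blast
  show ?thesis
  proof (rule int_spanI[where c = "\<lambda>p. if p = 0 then 0 else c (p - 1)"])
    fix g h z
    assume g: "g holomorphic_on U" and h: "h holomorphic_on U" "h 0 = 0" and z: "z \<in> U"
    have "S_op g (\<Phi> g h) z = S_op g (\<lambda>x. \<Sum>p<m. of_int (c p) * ST_monomial g p (N - p) h x) z"
      using c[OF g h] by (intro S_op_cong[OF _ z])
    also have "\<dots> = (\<Sum>p<m. of_int (c p) * ST_monomial g (Suc p) (Suc N - Suc p) h z)"
      using g h by (simp add: S_op_sum[OF _ g _ z] holomorphic_on_ST_monomial)
    also have "\<dots> = (\<Sum>p<Suc m. of_int (if p = 0 then 0 else c (p - 1)) * ST_monomial g p (Suc N - p) h z)"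
      by (subst sum.lessThan_Suc_shift) simp
    finally show "S_op g (\<Phi> g h) z = \<dots>" .
  qed
qed

lemma int_span_T_op_if_monomials:
  assumes "int_span N m \<Phi>" and "m \<le> Suc N"
    and monomials: "\<And>p q. p < m \<Longrightarrow>
      int_span (Suc (p + q)) p (\<lambda>g h z. T_op g (ST_monomial g p q h) z - ST_monomial g p (Suc q) h z)"
  shows "int_span (Suc N) m (\<lambda>g h. T_op g (\<Phi> g h))"
proof -
  obtain c where c: "\<And>g h z. g holomorphic_on U \<Longrightarrow> h holomorphic_on U \<Longrightarrow> h 0 = 0 \<Longrightarrow> z \<in> U \<Longrightarrow>
      \<Phi> g h z = (\<Sum>p<m. of_int (c p) * ST_monomial g p (N - p) h z)"
    using assms(1) unfolding int_span_def by blast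
  have "int_span (Suc N) m (\<lambda>g h. T_op g (ST_monomial g p (N - p) h))" if "p < m" for p
  proof (rule int_span_mono)
    show "int_span (Suc N) (Suc p) (\<lambda>g h. T_op g (ST_monomial g p (N - p) h))"
      using monomials[OF that, of "N - p"] that \<open>m \<le> Suc N\<close>
      by (intro int_span_add_monomial) (simp add: Suc_diff_le)
  qed (use that in simp)
  then have "int_span (Suc N) m (\<lambda>g h z. \<Sum>p<m. of_int (c p) * T_op g (ST_monomial g p (N - p) h) z)"
    by (intro int_span_sum int_span_scale) auto
  then show ?thesis
  proof (rule int_span_cong)
    fix g h z
    assume g: "g holomorphic_on U" and h: "h holomorphic_on U" "h 0 = 0" and z: "z \<in> U"
    have "T_op g (\<Phi> g h) z = T_op g (\<lambda>x. \<Sum>p<m. of_int (c p) * ST_monomial g p (N - p) h x) z"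
      using c[OF g h] by (intro T_op_cong[OF _ z])
    also have "\<dots> = (\<Sum>p<m. of_int (c p) * T_op g (ST_monomial g p (N - p) h) z)"
      using g h by (simp add: T_op_sum[OF _ g _ z] holomorphic_on_ST_monomial)
    finally show "T_op g (\<Phi> g h) z = \<dots>" .
  qed
qed

lemma int_span_T_op_ST_monomial:
  "int_span (Suc (p + q)) p (\<lambda>g h z. T_op g (ST_monomial g p q h) z - ST_monomial g p (Suc q) h z)"
proof (induction p arbitrary: q rule: less_induct)
  case (less p)
  show ?case
  proof (cases p)
    case 0
    then show ?thesis
      by (intro int_span_cong[OF int_span_zero]) simp
  next
    case (Suc k)
    have "int_span (Suc (k + q)) (Suc k) (\<lambda>g h. T_op g (ST_monomial g k q h))"
      by (rule int_span_add_monomial) (use less.IH[of k q] Suc in simp)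
    then have TT: "int_span (Suc (Suc (k + q))) (Suc k) (\<lambda>g h. T_op g (T_op g (ST_monomial g k q h)))"
      by (rule int_span_T_op_if_monomials) (use less.IH Suc in auto)
    have ST: "int_span (Suc (Suc (k + q))) (Suc k)
        (\<lambda>g h. S_op g (\<lambda>z. T_op g (ST_monomial g k q h) z - ST_monomial g k (Suc q) h z))"
      using int_span_S_op[OF less.IH[of k q]] Suc by simp
    have "int_span (Suc (Suc (k + q))) (Suc k)
        (\<lambda>g h z. T_op g (ST_monomial g p q h) z - ST_monomial g p (Suc q) h z)"
    proof (rule int_span_cong[OF int_span_diff[OF ST TT]])
      fix g h z
      assume g: "g holomorphic_on U" and h: "h holomorphic_on U" "h 0 = 0" and z: "z \<in> U"
      note hol = holomorphic_on_ST_monomial[OF g h(1)]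
        holomorphic_on_T_op[OF g holomorphic_on_ST_monomial[OF g h(1)]]
      have "T_op g (ST_monomial g p q h) z = T_op g (S_op g (ST_monomial g k q h)) z"
        using Suc by simp
      also have "\<dots> = S_op g (T_op g (ST_monomial g k q h)) z - T_op g (T_op g (ST_monomial g k q h)) z"
        using T_op_S_op_commutation[OF g hol(1) ST_monomial_at_0[where h = h, OF h(2)] z] .
      finally show "T_op g (ST_monomial g p q h) z - ST_monomial g p (Suc q) h z
          = S_op g (\<lambda>z. T_op g (ST_monomial g k q h) z - ST_monomial g k (Suc q) h z) z
            - T_op g (T_op g (ST_monomial g k q h)) z"
        using Suc by (simp add: S_op_diff[OF g hol(2) hol(1) z])
    qed
    then show ?thesis
      using Suc by simp
  qed
qed

lemma int_span_T_op:
  assumes "int_span N m \<Phi>" "m \<le> Suc N"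
  shows "int_span (Suc N) m (\<lambda>g h. T_op g (\<Phi> g h))"
  using assms int_span_T_op_ST_monomial by (rule int_span_T_op_if_monomials)

lemma int_span_word_op:
  "int_span (length w) (length (filter (\<lambda>b. b) w))
    (\<lambda>g h z. word_op g w h z - ST_monomial g (length (filter (\<lambda>b. b) w)) (length (filter Not w)) h z)"
proof (induction w)
  case Nil
  then show ?case
    by (intro int_span_cong[OF int_span_zero]) simp
next
  case (Cons b w)
  define m where "m = length (filter (\<lambda>b. b) w)"
  define n where "n = length (filter Not w)"
  have len: "length w = m + n"
    using sum_length_filter_compl[of "\<lambda>b. b" w] by (simp add: m_def n_def)
  show ?case
  proof (cases b)
    case True
    have "int_span (Suc (length w)) (Suc m) (\<lambda>g h z. word_op g (b # w) h z - ST_monomial g (Suc m) n h z)"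
    proof (rule int_span_cong[OF int_span_S_op[OF Cons.IH[folded m_def n_def]]])
      fix g h z
      assume g: "g holomorphic_on U" and h: "h holomorphic_on U" and z: "z \<in> U"
      show "word_op g (b # w) h z - ST_monomial g (Suc m) n h z
          = S_op g (\<lambda>z. word_op g w h z - ST_monomial g m n h z) z"
        using True S_op_diff[OF g holomorphic_on_word_op[OF g h] holomorphic_on_ST_monomial[OF g h] z]
        by simp
    qed
    then show ?thesis
      using True by (simp add: m_def n_def)
  next
    case False
    have "int_span (Suc (length w)) m (\<lambda>g h z. T_op g (\<lambda>z. word_op g w h z - ST_monomial g m n h z) z
        + (T_op g (ST_monomial g m n h) z - ST_monomial g m (Suc n) h z))"
      using Cons.IH[folded m_def n_def] int_span_T_op_ST_monomial[of m n] len
      by (intro int_span_add int_span_T_op) simp_all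
    then have "int_span (Suc (length w)) m (\<lambda>g h z. word_op g (b # w) h z - ST_monomial g m (Suc n) h z)"
    proof (rule int_span_cong)
      fix g h z
      assume g: "g holomorphic_on U" and h: "h holomorphic_on U" and z: "z \<in> U"
      show "word_op g (b # w) h z - ST_monomial g m (Suc n) h z
          = T_op g (\<lambda>z. word_op g w h z - ST_monomial g m n h z) z
            + (T_op g (ST_monomial g m n h) z - ST_monomial g m (Suc n) h z)"
        using False T_op_diff[OF g holomorphic_on_word_op[OF g h] holomorphic_on_ST_monomial[OF g h] z]
        by simp
    qed
    then show ?thesis
      using False by (simp add: m_def n_def)
  qed
qed

lemma word_op_Pi0:
  assumes "w \<noteq> []" "last w" and f: "f holomorphic_on U" and z: "z \<in> U"
  shows "word_op g w (Pi0 f) z = word_op g w f z"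
proof -
  obtain v where w: "w = v @ [True]"
    using assms(1,2) by (cases w rule: rev_cases) auto
  have "word_op g w (Pi0 f) z = word_op g v (S_op g (Pi0 f)) z"
    by (simp add: w word_op_append_single)
  also have "\<dots> = word_op g v (S_op g f) z"
    by (rule word_op_cong[OF S_op_Pi0[OF f] z])
  also have "\<dots> = word_op g w f z"
    by (simp add: w word_op_append_single)
  finally show ?thesis .
qed

end

interpretation unit_disc: origin_starlike unit_disc
proof
  show "closed_segment 0 z \<subseteq> unit_disc" if "z \<in> unit_disc" for z
    using that unfolding unit_disc_def by (intro closed_segment_subset) auto
qed (simp_all add: unit_disc_def)

theorem proposition3p8:
  fixes m n :: nat and w :: "bool list"
  assumes "length (filter (\<lambda>b. b) w) = m"
    and "length (filter Not w) = n"
    and "w \<noteq> []" and "last w = True"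
  shows "\<exists>c :: nat \<Rightarrow> int. \<forall>g. g holomorphic_on unit_disc \<longrightarrow>
           (\<forall>f. f holomorphic_on unit_disc \<longrightarrow> (\<forall>z\<in>unit_disc.
              word_op g w f z =
                ((S_op g ^^ m) ((T_op g ^^ n) (Pi0 f))) z
                + (\<Sum>j=1..m. of_int (c j) * ((S_op g ^^ (m - j)) ((T_op g ^^ (n + j)) (Pi0 f))) z)))"
proof -
  have len: "length w = m + n"
    using sum_length_filter_compl[of "\<lambda>b. b" w] assms(1,2) by simp
  obtain c :: "nat \<Rightarrow> int" where c: "\<And>g h z. g holomorphic_on unit_disc \<Longrightarrow> h holomorphic_on unit_disc \<Longrightarrow>
      h 0 = 0 \<Longrightarrow> z \<in> unit_disc \<Longrightarrow>
      word_op g w h z - ST_monomial g m n h z = (\<Sum>p<m. of_int (c p) * ST_monomial g p (m + n - p) h z)"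
    using unit_disc.int_span_word_op[of w] unfolding unit_disc.int_span_def assms(1,2) len by blast
  show ?thesis
  proof (intro exI[of _ "\<lambda>j. c (m - j)"] allI impI ballI)
    fix g f z
    assume g: "g holomorphic_on unit_disc" and f: "f holomorphic_on unit_disc" and z: "z \<in> unit_disc"
    have Pi0_f: "Pi0 f holomorphic_on unit_disc" "Pi0 f 0 = 0"
      using f by (auto simp: Pi0_def intro!: holomorphic_intros)
    have "(\<Sum>j=1..m. of_int (c (m - j)) * ST_monomial g (m - j) (n + j) (Pi0 f) z)
        = (\<Sum>p<m. of_int (c p) * ST_monomial g p (m + n - p) (Pi0 f) z)"
      by (rule sum.reindex_bij_witness[where i = "\<lambda>p. m - p" and j = "\<lambda>j. m - j"]) auto
    moreover have "word_op g w f z = word_op g w (Pi0 f) z"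
      using unit_disc.word_op_Pi0[of w f z g] assms(3,4) f z by simp
    ultimately show "word_op g w f z = ((S_op g ^^ m) ((T_op g ^^ n) (Pi0 f))) z
        + (\<Sum>j=1..m. of_int (c (m - j)) * ((S_op g ^^ (m - j)) ((T_op g ^^ (n + j)) (Pi0 f))) z)"
      using c[OF g Pi0_f z] by (simp add: ST_monomial_def diff_eq_eq add.commute)
  qed
qed

end
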